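(* For all integers $c\geq 1$, $$\sum_{n\geq 0}\bar a_c(2n)q^n=\frac{f_2^{c-1}f_4^5}{f_1^{2c+2}f_8^2},\qquad \sum_{n\geq 0}\bar a_c(2n+1)q^n=2\,\frac{f_8^2}{f_4}\left(\frac{f_2}{f_1^2}\right)^{c+1}.$$
   Context: For an integer $k\geq 1$ let $f_k:=\prod_{n\geq 1}(1-q^{kn})$. For an integer $c\geq1$, the generalized overcubic partition function $\bar a_c(n)$ is defined by the generating function $\sum_{n\geq 0}\bar a_c(n)q^n=\dfrac{f_4^{c-1}}{f_1^2f_2^{2c-3}}$. *)

theory Defs
  imports "HOL-Computational_Algebra.Formal_Power_Series"
begin

text \<open>f_k = prod_{n>=1} (1 - q^{kn}) as a formal power series over the rationals.
  The m-th coefficient of the infinite product equals the m-th coefficient of the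
  finite product over 1 <= n <= m (further factors are 1 + O(q^{m+1}) for k >= 1).\<close>
definition eta_f :: "nat \<Rightarrow> rat fps" where
  "eta_f k = Abs_fps (\<lambda>m. fps_nth (\<Prod>n\<in>{1..m}. (1 - fps_X ^ (k * n))) m)"

text \<open>Generating function f_4^{c-1} / (f_1^2 f_2^{2c-3}); the possibly negative exponent
  2c-3 (c = 1) is handled by writing f_2^{-(2c-3)} = f_2 / f_2^{2c-2}.\<close>
definition overcubic_gf :: "nat \<Rightarrow> rat fps" where
  "overcubic_gf c = eta_f 4 ^ (c - 1) * eta_f 2 * inverse (eta_f 1 ^ 2 * eta_f 2 ^ (2 * c - 2))"

definition abar :: "nat \<Rightarrow> nat \<Rightarrow> rat" where
  "abar c n = fps_nth (overcubic_gf c) n"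

end

(*
  Write phi(q) = sum_{t in Z} q^(t^2) and 2 psi(q) = sum_{t in Z} q^(t(t-1)/2). Jacobi's triple
  product gives phi = f_2^5 / (f_1^2 f_4^2) and 2 psi = 2 f_2^2 / f_1, so the generating function
  equals f_4^(c+1) / f_2^(2c+2) * phi(q), a series in q^2 times phi(q). Splitting t by parity gives
  phi(q) = phi(q^4) + 2 q psi(q^8), from which the even and odd parts are read off.

  Both product formulas come from the finite triple product (g = alpha + beta)
    prod_{i<a} (x^(alpha + g i) + z) * prod_{j<b} (1 + z x^(beta + g j))
      = sum_k [a+b choose k]_{x^g} x^(alpha T(k-a) + beta T(k-a+1)) z^k,     T(t) = t(t-1)/2,
  which follows from the two Pascal recurrences for Gaussian binomials. Put z = 1, a = b = m and
  let m tend to infinity in the topology of formal power series: [2m choose k]_{q^g} tends to 1/f_g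
  when k and 2m - k are both large, and the other terms have high degree.
*)

theory Submission
  imports Defs "HOL-Computational_Algebra.Formal_Laurent_Series" "HOL-Computational_Algebra.Polynomial"
begin

section \<open>Truncations and limits of formal power series\<close>

lemma fps_cutoff_mult_cong:
  fixes f f' g g' :: "'a::comm_semiring_1 fps"
  assumes "fps_cutoff n f = fps_cutoff n f'" and "fps_cutoff n g = fps_cutoff n g'"
  shows "fps_cutoff n (f * g) = fps_cutoff n (f' * g')"
proof -
  have "(f * g) $ k = (f' * g') $ k" if "k < n" for k
  proof -
    have "(f * g) $ k = (fps_cutoff n f * fps_cutoff n g) $ k"
      using that by (simp add: fps_cutoff_left_mult_nth fps_cutoff_right_mult_nth)
    also have "\<dots> = (f' * g') $ k"
      using that assms by (simp add: fps_cutoff_left_mult_nth fps_cutoff_right_mult_nth)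
    finally show ?thesis .
  qed
  then show ?thesis by (simp add: fps_cutoff_eq_fps_cutoff_iff)
qed

lemma fps_cutoff_inverse_cong:
  fixes f g :: "'a::field fps"
  assumes "fps_cutoff n f = fps_cutoff n g" and "f $ 0 \<noteq> 0" and "g $ 0 \<noteq> 0"
  shows "fps_cutoff n (inverse f) = fps_cutoff n (inverse g)"
proof -
  have "fps_cutoff n (inverse g * f) = fps_cutoff n (inverse g * g)"
    by (rule fps_cutoff_mult_cong) (use assms(1) in simp_all)
  then have "fps_cutoff n (inverse g * f * inverse f) = fps_cutoff n (1 * inverse f)"
    using assms(3) by (intro fps_cutoff_mult_cong) (simp_all add: inverse_mult_eq_1)
  then show ?thesis
    using assms(2) by (simp add: mult.assoc inverse_mult_eq_1')
qed

lemma fps_cutoff_sum: "fps_cutoff n (\<Sum>i\<in>A. f i) = (\<Sum>i\<in>A. fps_cutoff n (f i))"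
  by (induction A rule: infinite_finite_induct) (simp_all add: fps_cutoff_add)

lemma fps_cutoff_mult_X_power_eq_0:
  fixes f :: "'a::comm_semiring_1 fps"
  assumes "n \<le> e"
  shows "fps_cutoff n (f * fps_X ^ e) = 0"
  using assms by (simp add: fps_eq_iff fps_X_power_mult_right_nth)

lemma fps_cutoff_one_minus_X_power:
  assumes "n \<le> e"
  shows "fps_cutoff n (1 - fps_X ^ e :: 'a::comm_ring_1 fps) = fps_cutoff n 1"
  using assms by (simp add: fps_eq_iff)

lemma tendsto_fps_cutoff_iff:
  "(F \<longlongrightarrow> (f :: 'a::group_add fps)) G \<longleftrightarrow> (\<forall>n. \<forall>\<^sub>F x in G. fps_cutoff n (F x) = fps_cutoff n f)"
proof -
  have cutoff: "(\<forall>\<^sub>F x in G. fps_cutoff n (F x) = fps_cutoff n f) \<longleftrightarrow> (\<forall>k<n. \<forall>\<^sub>F x in G. F x $ k = f $ k)" for n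
    using eventually_ball_finite_distrib[of "{..<n}" "\<lambda>x k. F x $ k = f $ k" G]
    by (simp add: fps_cutoff_eq_fps_cutoff_iff lessThan_def)
  show ?thesis
    unfolding tendsto_fps_iff cutoff
  proof (intro iffI allI impI)
    fix n k assume "\<forall>n. \<forall>\<^sub>F x in G. F x $ n = f $ n"
    then show "\<forall>\<^sub>F x in G. F x $ k = f $ k" by blast
  next
    fix n assume "\<forall>n k. k < n \<longrightarrow> (\<forall>\<^sub>F x in G. F x $ k = f $ k)"
    then show "\<forall>\<^sub>F x in G. F x $ n = f $ n" using lessI by blast
  qed
qed

lemma tendsto_fps_cutoff_cong:
  fixes f :: "'a::group_add fps"
  assumes "\<And>n. \<forall>\<^sub>F x in G. fps_cutoff n (F x) = fps_cutoff n (F' x)" and "(F' \<longlongrightarrow> f) G"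
  shows "(F \<longlongrightarrow> f) G"
  unfolding tendsto_fps_cutoff_iff
proof
  fix n
  show "\<forall>\<^sub>F x in G. fps_cutoff n (F x) = fps_cutoff n f"
    using assms(1)[of n] assms(2) unfolding tendsto_fps_cutoff_iff
    by (auto elim: eventually_elim2)
qed

lemma tendsto_fps_mult:
  fixes f h :: "'a::comm_ring_1 fps"
  assumes "(F \<longlongrightarrow> f) G" and "(H \<longlongrightarrow> h) G"
  shows "((\<lambda>x. F x * H x) \<longlongrightarrow> f * h) G"
  unfolding tendsto_fps_cutoff_iff
proof
  fix n
  have "\<forall>\<^sub>F x in G. fps_cutoff n (F x) = fps_cutoff n f"
    and "\<forall>\<^sub>F x in G. fps_cutoff n (H x) = fps_cutoff n h"
    using assms by (simp_all add: tendsto_fps_cutoff_iff)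
  then show "\<forall>\<^sub>F x in G. fps_cutoff n (F x * H x) = fps_cutoff n (f * h)"
    by eventually_elim (rule fps_cutoff_mult_cong)
qed

lemma tendsto_fps_power:
  fixes f :: "'a::comm_ring_1 fps"
  assumes "(F \<longlongrightarrow> f) G"
  shows "((\<lambda>x. F x ^ k) \<longlongrightarrow> f ^ k) G"
  by (induction k) (simp_all add: tendsto_fps_mult[OF assms])

lemma tendsto_fps_inverse:
  fixes f :: "'a::field fps"
  assumes "(F \<longlongrightarrow> f) G" and "f $ 0 \<noteq> 0"
  shows "((\<lambda>x. inverse (F x)) \<longlongrightarrow> inverse f) G"
  unfolding tendsto_fps_cutoff_iff
proof
  fix n
  have "\<forall>\<^sub>F x in G. fps_cutoff (Suc n) (F x) = fps_cutoff (Suc n) f"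
    using assms(1) by (simp add: tendsto_fps_cutoff_iff)
  then have "\<forall>\<^sub>F x in G. fps_cutoff (Suc n) (inverse (F x)) = fps_cutoff (Suc n) (inverse f)"
  proof eventually_elim
    case (elim x)
    then have "F x $ 0 = f $ 0"
      by (metis fps_cutoff_nth zero_less_Suc)
    with elim show ?case
      using assms(2) by (intro fps_cutoff_inverse_cong) simp_all
  qed
  then show "\<forall>\<^sub>F x in G. fps_cutoff n (inverse (F x)) = fps_cutoff n (inverse f)"
    by eventually_elim (metis fps_cutoff_eq_fps_cutoff_iff less_Suc_eq)
qed

lemma tendsto_fps_compose:
  fixes f :: "'a::comm_ring_1 fps"
  assumes "(F \<longlongrightarrow> f) G"
  shows "((\<lambda>x. F x oo c) \<longlongrightarrow> (f oo c)) G"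
  unfolding tendsto_fps_iff
proof
  fix n
  have "\<forall>\<^sub>F x in G. \<forall>i\<in>{0..n}. F x $ i = f $ i"
    using assms by (simp add: tendsto_fps_iff eventually_ball_finite_distrib)
  then show "\<forall>\<^sub>F x in G. (F x oo c) $ n = (f oo c) $ n"
    by eventually_elim (simp add: fps_compose_nth)
qed

lemma fps_compose_X_power_nth:
  fixes f :: "'a::comm_ring_1 fps"
  assumes "d \<ge> 1"
  shows "(f oo fps_X ^ d) $ n = (if d dvd n then f $ (n div d) else 0)"
proof -
  have "(f oo fps_X ^ d) $ n = (\<Sum>i=0..n. if n = d * i then f $ i else 0)"
    unfolding fps_compose_nth by (intro sum.cong) (simp_all flip: power_mult)
  also have "\<dots> = (\<Sum>i\<in>{0..n}. if i = n div d then (if d dvd n then f $ i else 0) else 0)"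
    using assms by (intro sum.cong) auto
  also have "\<dots> = (if d dvd n then f $ (n div d) else 0)"
    by (simp add: sum.delta)
  finally show ?thesis .
qed

lemma fps_compose_X_power_mult:
  fixes f :: "'a::idom fps"
  assumes "a \<ge> 1" and "b \<ge> 1"
  shows "f oo fps_X ^ (a * b) = (f oo fps_X ^ a) oo fps_X ^ b"
proof -
  have "fps_X ^ a oo fps_X ^ b = (fps_X ^ (a * b) :: 'a fps)"
    using assms by (simp add: fps_X_power_compose power_mult[symmetric] mult.commute)
  then show ?thesis
    using assms by (simp add: fps_compose_assoc[symmetric])
qed

lemma fps_even_odd_parts:
  fixes A B :: "'a::comm_ring_1 fps"
  shows "Abs_fps (\<lambda>n. ((A oo fps_X ^ 2) + fps_X * (B oo fps_X ^ 2)) $ (2 * n)) = A"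
    and "Abs_fps (\<lambda>n. ((A oo fps_X ^ 2) + fps_X * (B oo fps_X ^ 2)) $ (2 * n + 1)) = B"
  by (simp_all add: fps_eq_iff fps_compose_X_power_nth)

lemma fps_eq_mult_inverse:
  fixes f g h :: "'a::field fps"
  assumes "g $ 0 \<noteq> 0" and "f * g = h"
  shows "f = h * inverse g"
  using assms by (metis inverse_mult_eq_1' mult.assoc mult.right_neutral)

lemma fps_to_fls_inverse:
  fixes f :: "'a::field fps"
  assumes "f $ 0 \<noteq> 0"
  shows "fps_to_fls (inverse f) = inverse (fps_to_fls f)"
  using assms by (simp add: fls_inverse_fps_to_fls)

lemmas fps_to_fls_simps = fls_times_fps_to_fls fps_to_fls_power fps_to_fls_inverse fps_power_zeroth

section \<open>q-Pochhammer symbols and Gaussian binomial coefficients\<close>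

definition qpochhammer :: "'a::comm_ring_1 \<Rightarrow> nat \<Rightarrow> 'a" where
  "qpochhammer q n = (\<Prod>j=1..n. 1 - q ^ j)"

lemma qpochhammer_0 [simp]: "qpochhammer q 0 = 1"
  by (simp add: qpochhammer_def)

lemma qpochhammer_Suc: "qpochhammer q (Suc n) = qpochhammer q n * (1 - q ^ Suc n)"
  by (simp add: qpochhammer_def)

fun qbinomial :: "'a::comm_ring_1 \<Rightarrow> nat \<Rightarrow> nat \<Rightarrow> 'a" where
  "qbinomial q n 0 = 1"
| "qbinomial q 0 (Suc k) = 0"
| "qbinomial q (Suc n) (Suc k) = qbinomial q n k + q ^ Suc k * qbinomial q n (Suc k)"

lemma qbinomial_eq_0: "n < k \<Longrightarrow> qbinomial q n k = 0"
proof (induction n arbitrary: k)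
  case 0
  then show ?case by (cases k) simp_all
next
  case (Suc n)
  then show ?case by (cases k) simp_all
qed

lemma qbinomial_Suc_Suc':
  "qbinomial q (Suc n) (Suc k) = qbinomial q n (Suc k) + q ^ (n - k) * qbinomial q n k"
proof (induction n arbitrary: k)
  case 0
  then show ?case by (cases k) simp_all
next
  case (Suc n)
  show ?case
  proof (cases k)
    case 0
    then show ?thesis using Suc.IH[of 0] by (simp add: algebra_simps)
  next
    case (Suc j)
    have shift: "q ^ Suc (Suc j) * (q ^ (n - Suc j) * qbinomial q n (Suc j))
        = q ^ (Suc n - Suc j) * (q ^ Suc j * qbinomial q n (Suc j))"
    proof (cases "j < n")
      case True
      then have "Suc (Suc j) + (n - Suc j) = (Suc n - Suc j) + Suc j" by simp
      then show ?thesis by (metis mult.assoc power_add)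
    next
      case False
      then show ?thesis by (simp add: qbinomial_eq_0)
    qed
    have "qbinomial q (Suc (Suc n)) (Suc k)
        = qbinomial q (Suc n) (Suc j) + q ^ Suc (Suc j) * qbinomial q (Suc n) (Suc (Suc j))"
      by (simp add: Suc)
    also have "\<dots> = (qbinomial q n (Suc j) + q ^ (n - j) * qbinomial q n j)
        + q ^ Suc (Suc j) * (qbinomial q n (Suc (Suc j)) + q ^ (n - Suc j) * qbinomial q n (Suc j))"
      by (simp only: Suc.IH)
    also have "\<dots> = (qbinomial q n (Suc j) + q ^ Suc (Suc j) * qbinomial q n (Suc (Suc j)))
        + q ^ (Suc n - Suc j) * (qbinomial q n j + q ^ Suc j * qbinomial q n (Suc j))"
      using shift by (simp add: algebra_simps)
    also have "\<dots> = qbinomial q (Suc n) (Suc k) + q ^ (Suc n - k) * qbinomial q (Suc n) k"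
      by (simp add: Suc)
    finally show ?thesis .
  qed
qed

lemma qbinomial_qpochhammer:
  assumes "k \<le> n"
  shows "qbinomial q n k * qpochhammer q k * qpochhammer q (n - k) = qpochhammer q n"
  using assms
proof (induction n arbitrary: k)
  case 0
  then show ?case by simp
next
  case (Suc n)
  show ?case
  proof (cases k)
    case 0
    then show ?thesis by simp
  next
    case (Suc j)
    have first: "qbinomial q n j * qpochhammer q (Suc j) * qpochhammer q (n - j) = qpochhammer q n * (1 - q ^ Suc j)"
    proof -
      have "qbinomial q n j * qpochhammer q (Suc j) * qpochhammer q (n - j)
          = (qbinomial q n j * qpochhammer q j * qpochhammer q (n - j)) * (1 - q ^ Suc j)"
        by (simp add: qpochhammer_Suc ac_simps)
      then show ?thesis
        using Suc.IH[of j] Suc.prems \<open>k = Suc j\<close> by simp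
    qed
    have second: "q ^ Suc j * qbinomial q n (Suc j) * qpochhammer q (Suc j) * qpochhammer q (n - j)
        = qpochhammer q n * (q ^ Suc j - q ^ Suc n)"
    proof (cases "j < n")
      case True
      have "Suc j + (n - j) = Suc n"
        using True by simp
      then have power: "q ^ Suc j * q ^ (n - j) = q ^ Suc n"
        by (metis power_add)
      have "qpochhammer q (n - j) = qpochhammer q (n - Suc j) * (1 - q ^ (n - j))"
        using True by (metis Suc_diff_Suc qpochhammer_Suc)
      then have "q ^ Suc j * qbinomial q n (Suc j) * qpochhammer q (Suc j) * qpochhammer q (n - j)
          = q ^ Suc j * (qbinomial q n (Suc j) * qpochhammer q (Suc j) * qpochhammer q (n - Suc j)) * (1 - q ^ (n - j))"
        by (simp add: ac_simps)
      also have "\<dots> = qpochhammer q n * (q ^ Suc j - q ^ Suc j * q ^ (n - j))"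
        using Suc.IH[of "Suc j"] True by (simp add: algebra_simps)
      finally show ?thesis
        by (simp only: power)
    next
      case False
      then show ?thesis
        using Suc.prems \<open>k = Suc j\<close> by (simp add: qbinomial_eq_0)
    qed
    have "qbinomial q (Suc n) k * qpochhammer q k * qpochhammer q (Suc n - k)
        = qbinomial q n j * qpochhammer q (Suc j) * qpochhammer q (n - j)
          + q ^ Suc j * qbinomial q n (Suc j) * qpochhammer q (Suc j) * qpochhammer q (n - j)"
      unfolding Suc qbinomial.simps diff_Suc_Suc by (simp only: distrib_right)
    also have "\<dots> = qpochhammer q (Suc n)"
      unfolding first second by (simp add: qpochhammer_Suc algebra_simps)
    finally show ?thesis .
  qed
qed

lemma prod_one_plus_powers:
  fixes x :: "'a::comm_ring_1"
  shows "(\<Prod>i<m. 1 + x ^ (i + 1)) * qpochhammer x m = qpochhammer (x ^ 2) m"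
proof (induction m)
  case (Suc m)
  have "(x ^ 2) ^ Suc m = x ^ Suc m * x ^ Suc m"
    unfolding power_mult[symmetric] power_add[symmetric] by (rule arg_cong[where f = "power x"]) simp
  moreover have "P * (1 + y) * (Q * (1 - y)) = (P * Q) * (1 - y * y)" for P Q y :: 'a
    by (simp add: algebra_simps)
  ultimately show ?case
    using Suc.IH by (simp add: qpochhammer_Suc)
qed simp

lemma prod_one_plus_odd_powers:
  fixes x :: "'a::comm_ring_1"
  shows "(\<Prod>i<m. 1 + x ^ (2 * i + 1)) * qpochhammer (x ^ 4) m * qpochhammer x (2 * m)
       = qpochhammer (x ^ 2) (2 * m) * qpochhammer (x ^ 2) m"
proof (induction m)
  case (Suc m)
  let ?y = "x ^ Suc (2 * m)" and ?u = "x ^ Suc (Suc (2 * m))" and ?w = "x ^ (4 * m + 4)"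
  have "(x ^ 2) ^ Suc (2 * m) = ?y * ?y" and "(x ^ 2) ^ Suc (Suc (2 * m)) = ?w"
    and "(x ^ 4) ^ Suc m = ?w" and "(x ^ 2) ^ Suc m = ?u"
    unfolding power_mult[symmetric] power_add[symmetric] by (rule arg_cong[where f = "power x"]; simp)+
  then have "qpochhammer x (2 * Suc m) = qpochhammer x (2 * m) * (1 - ?y) * (1 - ?u)"
    and "qpochhammer (x ^ 2) (2 * Suc m) = qpochhammer (x ^ 2) (2 * m) * (1 - ?y * ?y) * (1 - ?w)"
    and "qpochhammer (x ^ 4) (Suc m) = qpochhammer (x ^ 4) m * (1 - ?w)"
    and "qpochhammer (x ^ 2) (Suc m) = qpochhammer (x ^ 2) m * (1 - ?u)"
    by (simp_all add: qpochhammer_Suc)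
  moreover have "P * (1 + y) * (Q4 * (1 - w)) * (Q * (1 - y) * (1 - u))
      = Q2 * (1 - y * y) * (1 - w) * (Q2' * (1 - u))" if "P * Q4 * Q = Q2 * Q2'"
    for P Q4 Q Q2 Q2' y u w :: 'a
  proof -
    have "P * (1 + y) * (Q4 * (1 - w)) * (Q * (1 - y) * (1 - u))
        = (P * Q4 * Q) * ((1 - y * y) * (1 - w) * (1 - u))"
      by (simp add: algebra_simps)
    also have "\<dots> = Q2 * (1 - y * y) * (1 - w) * (Q2' * (1 - u))"
      unfolding that by (simp only: ac_simps)
    finally show ?thesis .
  qed
  ultimately show ?case
    using Suc.IH by (simp add: qpochhammer_Suc)
qed simp

lemma qpochhammer_nth_0 [simp]:
  fixes q :: "'a::comm_ring_1 fps"
  assumes "q $ 0 = 0"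
  shows "qpochhammer q n $ 0 = 1"
  using assms by (induction n) (simp_all add: qpochhammer_Suc fps_power_zeroth)

lemma qpochhammer_compose:
  fixes q c :: "'a::idom fps"
  assumes "c $ 0 = 0"
  shows "qpochhammer q n oo c = qpochhammer (q oo c) n"
  using assms
  by (simp add: qpochhammer_def fps_compose_prod_distrib fps_compose_sub_distrib fps_compose_power)

section \<open>A finite form of Jacobi's triple product\<close>

definition tri :: "int \<Rightarrow> int" where
  "tri t = t * (t - 1) div 2"

lemma two_tri: "2 * tri t = t * (t - 1)"
  unfolding tri_def by simp

lemma tri_plus_one: "tri (t + 1) = tri t + t"
  using two_tri[of t] two_tri[of "t + 1"] by (simp add: algebra_simps)

lemma tri_uminus: "tri (- t) = tri (t + 1)"
  unfolding tri_def by (simp add: algebra_simps)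

lemma tri_nonneg: "0 \<le> tri t"
proof -
  have "0 \<le> t * (t - 1)"
    by (cases "t \<le> 0") (simp_all add: mult_nonpos_nonpos)
  then show ?thesis
    using two_tri[of t] by simp
qed

lemma abs_le_tri: "\<bar>t\<bar> \<le> tri t + 1"
proof -
  have "0 \<le> (t - 1) * (t - 2)"
    by (cases "t \<le> 1") (simp_all add: mult_nonpos_nonpos)
  moreover have "0 \<le> t * (t + 1)"
    by (cases "t \<le> -1") (simp_all add: mult_nonpos_nonpos)
  ultimately show ?thesis
    using two_tri[of t] by (simp add: abs_if algebra_simps)
qed

definition theta_exp :: "nat \<Rightarrow> nat \<Rightarrow> int \<Rightarrow> nat" where
  "theta_exp \<alpha> \<beta> t = nat (int \<alpha> * tri t + int \<beta> * tri (t + 1))"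

lemma theta_exp_0 [simp]: "theta_exp \<alpha> \<beta> 0 = 0"
  by (simp add: theta_exp_def tri_def)

lemma of_nat_theta_exp: "int (theta_exp \<alpha> \<beta> t) = int \<alpha> * tri t + int \<beta> * tri (t + 1)"
  unfolding theta_exp_def using tri_nonneg[of t] tri_nonneg[of "t + 1"] by simp

lemma theta_exp_plus_one:
  "int (theta_exp \<alpha> \<beta> (t + 1)) = int (theta_exp \<alpha> \<beta> t) + int (\<alpha> + \<beta>) * t + int \<beta>"
  unfolding of_nat_theta_exp using tri_plus_one[of t] tri_plus_one[of "t + 1"]
  by (simp add: algebra_simps)

lemma abs_le_theta_exp:
  assumes "\<alpha> + \<beta> \<ge> 1"
  shows "\<bar>t\<bar> \<le> int (theta_exp \<alpha> \<beta> t) + 1"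
proof (cases "\<alpha> \<ge> 1")
  case True
  then have "tri t \<le> int \<alpha> * tri t"
    using tri_nonneg[of t] by (simp add: mult_le_cancel_right1)
  then show ?thesis
    using abs_le_tri[of t] mult_nonneg_nonneg[OF _ tri_nonneg[of "t + 1"], of "int \<beta>"]
    unfolding of_nat_theta_exp by linarith
next
  case False
  then have "tri (t + 1) \<le> int \<beta> * tri (t + 1)"
    using assms tri_nonneg[of "t + 1"] by (simp add: mult_le_cancel_right1)
  then show ?thesis
    using abs_le_tri[of "- t"] mult_nonneg_nonneg[OF _ tri_nonneg[of t], of "int \<alpha>"]
    unfolding of_nat_theta_exp tri_uminus by linarith
qed

lemma theta_exp_shift_first:
  "theta_exp \<alpha> \<beta> (- 1 - int a) = \<alpha> + (\<alpha> + \<beta>) * a + theta_exp \<alpha> \<beta> (- int a)"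
  by (subst of_nat_eq_iff[where 'a = int, symmetric])
    (use theta_exp_plus_one[of \<alpha> \<beta> "- 1 - int a"] in \<open>simp add: algebra_simps\<close>)

lemma theta_exp_shift_left:
  "\<alpha> + (\<alpha> + \<beta>) * a + theta_exp \<alpha> \<beta> (int k - int a + 1)
     = (\<alpha> + \<beta>) * Suc k + theta_exp \<alpha> \<beta> (int k - int a)"
  by (subst of_nat_eq_iff[where 'a = int, symmetric])
    (use theta_exp_plus_one[of \<alpha> \<beta> "int k - int a"] in \<open>simp add: algebra_simps\<close>)

lemma theta_exp_shift_right:
  assumes "k \<le> a + b"
  shows "(\<alpha> + \<beta>) * (a + b - k) + theta_exp \<alpha> \<beta> (int k - int a + 1)
     = \<beta> + (\<alpha> + \<beta>) * b + theta_exp \<alpha> \<beta> (int k - int a)"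
proof -
  obtain r where r: "a + b = k + r"
    using assms le_Suc_ex by blast
  then have "int k + int r = int a + int b"
    by simp
  then have "int ((\<alpha> + \<beta>) * r + theta_exp \<alpha> \<beta> (int k - int a + 1))
      = int (\<beta> + (\<alpha> + \<beta>) * b + theta_exp \<alpha> \<beta> (int k - int a))"
    using theta_exp_plus_one[of \<alpha> \<beta> "int k - int a"] by simp algebra
  then show ?thesis
    unfolding of_nat_eq_iff using r by simp
qed

lemma coeff_mult_monic_linear:
  fixes p :: "'a::comm_ring_1 poly"
  shows "coeff (p * [:c, 1:]) 0 = c * coeff p 0"
    and "coeff (p * [:c, 1:]) (Suc k) = c * coeff p (Suc k) + coeff p k"
  by (simp_all add: coeff_pCons')

lemma coeff_mult_unit_linear:
  fixes p :: "'a::comm_ring_1 poly"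
  shows "coeff (p * [:1, c:]) 0 = coeff p 0"
    and "coeff (p * [:1, c:]) (Suc k) = coeff p (Suc k) + c * coeff p k"
  by (simp_all add: coeff_pCons')

lemma coeff_finite_triple_product_first_factor:
  fixes x :: "'a::comm_ring_1"
  shows "coeff (\<Prod>i<a. [:x ^ (\<alpha> + (\<alpha> + \<beta>) * i), 1:]) k
     = qbinomial (x ^ (\<alpha> + \<beta>)) a k * x ^ theta_exp \<alpha> \<beta> (int k - int a)"
proof (induction a arbitrary: k)
  case 0
  then show ?case by (cases k) simp_all
next
  case (Suc a)
  let ?q = "x ^ (\<alpha> + \<beta>)" and ?c = "x ^ (\<alpha> + (\<alpha> + \<beta>) * a)"
  have prod: "(\<Prod>i<Suc a. [:x ^ (\<alpha> + (\<alpha> + \<beta>) * i), 1:])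
      = (\<Prod>i<a. [:x ^ (\<alpha> + (\<alpha> + \<beta>) * i), 1:]) * [:?c, 1:]"
    by simp
  show ?case
  proof (cases k)
    case 0
    then show ?thesis
      unfolding prod \<open>k = 0\<close> coeff_mult_monic_linear Suc.IH
      by (simp add: theta_exp_shift_first power_add)
  next
    case (Suc j)
    have "?c * x ^ theta_exp \<alpha> \<beta> (int j - int a + 1) = ?q ^ Suc j * x ^ theta_exp \<alpha> \<beta> (int j - int a)"
      by (simp only: power_mult[symmetric] power_add[symmetric] theta_exp_shift_left)
    then show ?thesis
      unfolding prod Suc coeff_mult_monic_linear Suc.IH
      by (simp add: algebra_simps)
  qed
qed

lemma coeff_finite_triple_product:
  fixes x :: "'a::comm_ring_1"
  shows "coeff ((\<Prod>i<a. [:x ^ (\<alpha> + (\<alpha> + \<beta>) * i), 1:]) * (\<Prod>j<b. [:1, x ^ (\<beta> + (\<alpha> + \<beta>) * j):])) k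
     = qbinomial (x ^ (\<alpha> + \<beta>)) (a + b) k * x ^ theta_exp \<alpha> \<beta> (int k - int a)"
proof (induction b arbitrary: k)
  case 0
  then show ?case by (simp add: coeff_finite_triple_product_first_factor)
next
  case (Suc b)
  let ?P = "(\<Prod>i<a. [:x ^ (\<alpha> + (\<alpha> + \<beta>) * i), 1:]) * (\<Prod>j<b. [:1, x ^ (\<beta> + (\<alpha> + \<beta>) * j):])"
  let ?q = "x ^ (\<alpha> + \<beta>)" and ?c = "x ^ (\<beta> + (\<alpha> + \<beta>) * b)"
  have prod: "(\<Prod>i<a. [:x ^ (\<alpha> + (\<alpha> + \<beta>) * i), 1:]) * (\<Prod>j<Suc b. [:1, x ^ (\<beta> + (\<alpha> + \<beta>) * j):])
      = ?P * [:1, ?c:]"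
    by (simp only: prod.lessThan_Suc mult.assoc)
  show ?case
  proof (cases k)
    case 0
    then show ?thesis
      unfolding prod \<open>k = 0\<close> coeff_mult_unit_linear Suc.IH by simp
  next
    case (Suc j)
    have "?q ^ (a + b - j) * qbinomial ?q (a + b) j * x ^ theta_exp \<alpha> \<beta> (int j - int a + 1)
        = ?c * (qbinomial ?q (a + b) j * x ^ theta_exp \<alpha> \<beta> (int j - int a))"
    proof (cases "j \<le> a + b")
      case True
      then have "?q ^ (a + b - j) * x ^ theta_exp \<alpha> \<beta> (int j - int a + 1)
          = ?c * x ^ theta_exp \<alpha> \<beta> (int j - int a)"
        by (simp only: power_mult[symmetric] power_add[symmetric] theta_exp_shift_right)
      then show ?thesis
        by (simp only: ac_simps)
    next
      case False
      then show ?thesis by (simp add: qbinomial_eq_0)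
    qed
    moreover have "int (Suc j) - int a = int j - int a + 1"
      by simp
    ultimately show ?thesis
      unfolding prod Suc coeff_mult_unit_linear Suc.IH add_Suc_right qbinomial_Suc_Suc'
      by (simp only: distrib_right)
  qed
qed

lemma finite_triple_product:
  fixes x z :: "'a::comm_ring_1"
  shows "(\<Prod>i<a. x ^ (\<alpha> + (\<alpha> + \<beta>) * i) + z) * (\<Prod>j<b. 1 + z * x ^ (\<beta> + (\<alpha> + \<beta>) * j))
     = (\<Sum>k\<le>a + b. qbinomial (x ^ (\<alpha> + \<beta>)) (a + b) k * x ^ theta_exp \<alpha> \<beta> (int k - int a) * z ^ k)"
proof -
  let ?Q = "(\<Prod>i<a. [:x ^ (\<alpha> + (\<alpha> + \<beta>) * i), 1:]) * (\<Prod>j<b. [:1, x ^ (\<beta> + (\<alpha> + \<beta>) * j):])"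
  have "degree ?Q \<le> a + b"
    by (rule degree_le) (simp add: coeff_finite_triple_product qbinomial_eq_0)
  then have "poly ?Q z = poly (\<Sum>k\<le>a + b. monom (coeff ?Q k) k) z"
    by (simp only: poly_as_sum_of_monoms')
  then show ?thesis
    by (simp add: poly_prod poly_sum poly_monom coeff_finite_triple_product)
qed

section \<open>Eta functions as limits of q-Pochhammer symbols\<close>

lemma eta_f_nth_0 [simp]: "eta_f k $ 0 = 1"
  by (simp add: eta_f_def)

lemma eta_f_nonzero [simp]: "eta_f k \<noteq> 0"
  by (metis eta_f_nth_0 fps_nonzeroI one_neq_zero)

lemma fps_cutoff_qpochhammer_X_power_stable:
  fixes k :: nat
  assumes "k \<ge> 1" and "n \<le> M"
  shows "fps_cutoff (Suc n) (qpochhammer (fps_X ^ k :: 'a::comm_ring_1 fps) M)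
    = fps_cutoff (Suc n) (qpochhammer (fps_X ^ k) n)"
  using assms(2)
proof (induction M rule: dec_induct)
  case (step M)
  have "Suc n \<le> k * Suc M"
    using mult_le_mono1[OF assms(1), of "Suc M"] step.hyps(1) by simp
  then have "fps_cutoff (Suc n) (1 - (fps_X ^ k) ^ Suc M) = fps_cutoff (Suc n) (1 :: 'a fps)"
    unfolding power_mult[symmetric] by (rule fps_cutoff_one_minus_X_power)
  then show ?case
    using fps_cutoff_mult_cong[OF step.IH] by (simp add: qpochhammer_Suc)
qed simp

lemma fps_cutoff_qpochhammer_eq_eta_f:
  assumes "k \<ge> 1" and "n \<le> M"
  shows "fps_cutoff n (qpochhammer (fps_X ^ k) M) = fps_cutoff n (eta_f k)"
proof -
  have "qpochhammer (fps_X ^ k) M $ i = eta_f k $ i" if "i < n" for i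
  proof -
    have "fps_cutoff (Suc i) (qpochhammer (fps_X ^ k) M) = fps_cutoff (Suc i) (qpochhammer (fps_X ^ k) i)"
      using assms that by (intro fps_cutoff_qpochhammer_X_power_stable) simp_all
    then have "qpochhammer (fps_X ^ k) M $ i = qpochhammer (fps_X ^ k) i $ i"
      by (metis fps_cutoff_nth lessI)
    then show ?thesis
      by (simp add: eta_f_def qpochhammer_def power_mult)
  qed
  then show ?thesis
    by (simp add: fps_cutoff_eq_fps_cutoff_iff)
qed

lemma qpochhammer_tendsto_eta_f:
  assumes "k \<ge> 1" and "filterlim h at_top F"
  shows "((\<lambda>x. qpochhammer (fps_X ^ k) (h x)) \<longlongrightarrow> eta_f k) F"
  unfolding tendsto_fps_cutoff_iff
proof
  fix n
  have "\<forall>\<^sub>F x in F. n \<le> h x"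
    using assms(2) by (simp add: filterlim_at_top)
  then show "\<forall>\<^sub>F x in F. fps_cutoff n (qpochhammer (fps_X ^ k) (h x)) = fps_cutoff n (eta_f k)"
    by eventually_elim (rule fps_cutoff_qpochhammer_eq_eta_f[OF assms(1)])
qed

lemma eta_f_compose_X_power:
  assumes "k \<ge> 1" and "d \<ge> 1"
  shows "eta_f k oo fps_X ^ d = eta_f (k * d)"
proof -
  have "fps_X ^ k oo fps_X ^ d = (fps_X ^ (k * d) :: rat fps)"
    using assms by (simp add: fps_X_power_compose power_mult[symmetric] mult.commute)
  moreover have "qpochhammer (fps_X ^ k) M oo fps_X ^ d = qpochhammer (fps_X ^ k oo fps_X ^ d :: rat fps) M" for M
    by (rule qpochhammer_compose) (use assms in simp)
  ultimately have "qpochhammer (fps_X ^ k) M oo fps_X ^ d = qpochhammer (fps_X ^ (k * d) :: rat fps) M" for M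
    by simp
  then have "(\<lambda>M. qpochhammer (fps_X ^ k) M oo fps_X ^ d) \<longlonglongrightarrow> eta_f (k * d)"
    using assms qpochhammer_tendsto_eta_f[OF _ filterlim_ident, of "k * d"] by simp
  moreover have "(\<lambda>M. qpochhammer (fps_X ^ k) M oo fps_X ^ d) \<longlonglongrightarrow> (eta_f k oo fps_X ^ d)"
    using assms by (intro tendsto_fps_compose qpochhammer_tendsto_eta_f filterlim_ident)
  ultimately show ?thesis
    using LIMSEQ_unique by blast
qed

lemmas eta_quotient_compose_simps =
  fps_compose_mult_distrib fps_compose_power[symmetric] fps_inverse_compose eta_f_compose_X_power

lemma fps_cutoff_qbinomial_X_power:
  assumes "g \<ge> 1" and "k \<le> N" and "n \<le> k" and "n \<le> N - k"
  shows "fps_cutoff n (qbinomial (fps_X ^ g) N k) = fps_cutoff n (inverse (eta_f g))"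
proof -
  let ?P = "qpochhammer (fps_X ^ g :: rat fps)"
  have "qbinomial (fps_X ^ g) N k = ?P N * inverse (?P k * ?P (N - k))"
    using qbinomial_qpochhammer[OF assms(2), of "fps_X ^ g"] assms(1)
    by (intro fps_eq_mult_inverse) (simp_all add: mult.assoc)
  also have "fps_cutoff n \<dots> = fps_cutoff n (eta_f g * inverse (eta_f g * eta_f g))"
    using assms
    by (intro fps_cutoff_mult_cong fps_cutoff_inverse_cong fps_cutoff_qpochhammer_eq_eta_f) simp_all
  also have "eta_f g * inverse (eta_f g * eta_f g) = inverse (eta_f g)"
    by (simp add: fps_inverse_mult mult.assoc[symmetric] inverse_mult_eq_1')
  finally show ?thesis .
qed

section \<open>Theta series\<close>

text \<open>\<^term>\<open>theta 1 1\<close> is Ramanujan's phi(q) and \<^term>\<open>theta 1 0\<close> is 2 psi(q).\<close>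
definition theta :: "nat \<Rightarrow> nat \<Rightarrow> rat fps" where
  "theta \<alpha> \<beta> = Abs_fps (\<lambda>n. of_nat (card {t. theta_exp \<alpha> \<beta> t = n}))"

lemma theta_exp_fibre_subset:
  assumes "\<alpha> + \<beta> \<ge> 1" and "theta_exp \<alpha> \<beta> t = n"
  shows "t \<in> {- int n - 1..int n + 1}"
  using abs_le_theta_exp[OF assms(1), of t] assms(2) by (simp add: abs_le_iff)

lemma finite_theta_exp_fibre:
  assumes "\<alpha> + \<beta> \<ge> 1"
  shows "finite {t. theta_exp \<alpha> \<beta> t = n}"
  by (rule finite_subset[of _ "{- int n - 1..int n + 1}"]) (use theta_exp_fibre_subset[OF assms] in auto)

lemma theta_partial_sums_tendsto:
  assumes "\<alpha> + \<beta> \<ge> 1"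
  shows "(\<lambda>m. \<Sum>t = - int m..int m. fps_X ^ theta_exp \<alpha> \<beta> t) \<longlonglongrightarrow> theta \<alpha> \<beta>"
proof (rule tendsto_fpsI)
  fix n
  have "(\<Sum>t = - int m..int m. fps_X ^ theta_exp \<alpha> \<beta> t) $ n = theta \<alpha> \<beta> $ n" if "n + 1 \<le> m" for m
  proof -
    have "{t. theta_exp \<alpha> \<beta> t = n} \<subseteq> {- int m..int m}"
    proof
      fix t
      assume "t \<in> {t. theta_exp \<alpha> \<beta> t = n}"
      then have "t \<in> {- int n - 1..int n + 1}"
        by (intro theta_exp_fibre_subset[OF assms]) simp
      then show "t \<in> {- int m..int m}"
        using that by simp
    qed
    then have "{- int m..int m} \<inter> {t. theta_exp \<alpha> \<beta> t = n} = {t. theta_exp \<alpha> \<beta> t = n}"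
      by blast
    moreover have "(\<Sum>t = - int m..int m. fps_X ^ theta_exp \<alpha> \<beta> t) $ n
        = (\<Sum>t = - int m..int m. of_bool (theta_exp \<alpha> \<beta> t = n))"
      unfolding fps_sum_nth fps_X_power_nth by (intro sum.cong) auto
    ultimately show ?thesis
      by (simp add: theta_def)
  qed
  then show "\<forall>\<^sub>F m in sequentially. (\<Sum>t = - int m..int m. fps_X ^ theta_exp \<alpha> \<beta> t) $ n = theta \<alpha> \<beta> $ n"
    unfolding eventually_sequentially by blast
qed

lemma sum_centered_reindex:
  "(\<Sum>k\<le>2 * m. f (int k - int m)) = (\<Sum>t = - int m..int m. f t)"
  by (rule sum.reindex_bij_witness[of _ "\<lambda>t. nat (t + int m)" "\<lambda>k. int k - int m"]) auto

lemma fps_cutoff_theta_triple_product_term: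
  assumes "\<alpha> + \<beta> \<ge> 1" and "2 * n \<le> m" and "k \<le> 2 * m"
  shows "fps_cutoff n (qbinomial (fps_X ^ (\<alpha> + \<beta>)) (2 * m) k * fps_X ^ theta_exp \<alpha> \<beta> (int k - int m))
       = fps_cutoff n (inverse (eta_f (\<alpha> + \<beta>)) * fps_X ^ theta_exp \<alpha> \<beta> (int k - int m))"
proof (cases "n \<le> theta_exp \<alpha> \<beta> (int k - int m)")
  case True
  then show ?thesis
    by (simp add: fps_cutoff_mult_X_power_eq_0)
next
  case False
  then have "\<bar>int k - int m\<bar> \<le> int n"
    using abs_le_theta_exp[OF assms(1), of "int k - int m"] by linarith
  then have "fps_cutoff n (qbinomial (fps_X ^ (\<alpha> + \<beta>)) (2 * m) k) = fps_cutoff n (inverse (eta_f (\<alpha> + \<beta>)))"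
    using assms by (intro fps_cutoff_qbinomial_X_power) auto
  then show ?thesis
    by (intro fps_cutoff_mult_cong) simp_all
qed

lemma theta_triple_product_tendsto:
  assumes "\<alpha> + \<beta> \<ge> 1"
  shows "(\<lambda>m. \<Sum>k\<le>2 * m. qbinomial (fps_X ^ (\<alpha> + \<beta>)) (2 * m) k * fps_X ^ theta_exp \<alpha> \<beta> (int k - int m))
     \<longlonglongrightarrow> inverse (eta_f (\<alpha> + \<beta>)) * theta \<alpha> \<beta>"
proof -
  let ?e = "theta_exp \<alpha> \<beta>" and ?H = "inverse (eta_f (\<alpha> + \<beta>))"
  have "(\<lambda>m. ?H * (\<Sum>t = - int m..int m. fps_X ^ ?e t)) \<longlonglongrightarrow> ?H * theta \<alpha> \<beta>"
    by (intro tendsto_fps_mult tendsto_const theta_partial_sums_tendsto assms)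
  moreover have "(\<Sum>k\<le>2 * m. ?H * fps_X ^ ?e (int k - int m)) = ?H * (\<Sum>t = - int m..int m. fps_X ^ ?e t)" for m
    by (simp only: sum_distrib_left[symmetric] sum_centered_reindex[of "\<lambda>t. fps_X ^ ?e t"])
  ultimately have "(\<lambda>m. \<Sum>k\<le>2 * m. ?H * fps_X ^ ?e (int k - int m)) \<longlonglongrightarrow> ?H * theta \<alpha> \<beta>"
    by simp
  moreover have "\<forall>\<^sub>F m in sequentially.
      fps_cutoff n (\<Sum>k\<le>2 * m. qbinomial (fps_X ^ (\<alpha> + \<beta>)) (2 * m) k * fps_X ^ ?e (int k - int m))
    = fps_cutoff n (\<Sum>k\<le>2 * m. ?H * fps_X ^ ?e (int k - int m))" for n
    unfolding eventually_sequentially fps_cutoff_sum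
    using fps_cutoff_theta_triple_product_term[OF assms] by (intro exI[of _ "2 * n"] allI impI sum.cong) auto
  ultimately show ?thesis
    by (rule tendsto_fps_cutoff_cong[rotated])
qed

lemma theta_1_1:
  "theta 1 1 = eta_f 2 ^ 5 * inverse (eta_f 1 ^ 2 * eta_f 4 ^ 2)"
proof -
  define P :: "nat \<Rightarrow> rat fps" where "P m = (\<Prod>i<m. 1 + fps_X ^ (2 * i + 1))" for m
  have "P m = qpochhammer (fps_X ^ 2) (2 * m) * qpochhammer (fps_X ^ 2) m * inverse (qpochhammer (fps_X ^ 4) m * qpochhammer (fps_X ^ 1) (2 * m))" for m
    using prod_one_plus_odd_powers[where x = "fps_X :: rat fps" and m = m]
    by (intro fps_eq_mult_inverse) (simp_all add: P_def mult.assoc flip: power_mult)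
  moreover have "(\<lambda>m. qpochhammer (fps_X ^ 2) (2 * m) * qpochhammer (fps_X ^ 2) m * inverse (qpochhammer (fps_X ^ 4) m * qpochhammer (fps_X ^ 1) (2 * m)))
      \<longlonglongrightarrow> eta_f 2 * eta_f 2 * inverse (eta_f 4 * eta_f 1)"
    by (intro tendsto_fps_mult tendsto_fps_inverse qpochhammer_tendsto_eta_f
        mult_nat_left_at_top filterlim_ident) simp_all
  ultimately have "(\<lambda>m. P m ^ 2) \<longlonglongrightarrow> (eta_f 2 * eta_f 2 * inverse (eta_f 4 * eta_f 1)) ^ 2"
    by (simp add: tendsto_fps_power)
  moreover have "(\<Sum>k\<le>2 * m. qbinomial (fps_X ^ 2) (2 * m) k * fps_X ^ theta_exp 1 1 (int k - int m)) = P m ^ 2" for m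
    using finite_triple_product[where x = "fps_X :: rat fps" and z = 1 and \<alpha> = 1 and \<beta> = 1 and a = m and b = m]
    unfolding one_add_one by (simp add: P_def power2_eq_square mult_2 add.commute)
  then have "(\<lambda>m. P m ^ 2) \<longlonglongrightarrow> inverse (eta_f 2) * theta 1 1"
    using theta_triple_product_tendsto[of 1 1] unfolding one_add_one by simp
  ultimately have "inverse (eta_f 2) * theta 1 1 = (eta_f 2 * eta_f 2 * inverse (eta_f 4 * eta_f 1)) ^ 2"
    using LIMSEQ_unique by blast
  from arg_cong[OF this, of fps_to_fls] show ?thesis
    unfolding fps_to_fls_eq_iff[symmetric]
    by (simp add: fps_to_fls_simps) (simp add: field_simps eval_nat_numeral)
qed

lemma theta_1_0:
  "theta 1 0 = 2 * eta_f 2 ^ 2 * inverse (eta_f 1)"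
proof -
  define R :: "nat \<Rightarrow> rat fps" where "R m = (\<Prod>i<m. 1 + fps_X ^ (i + 1))" for m
  have "R = (\<lambda>m. qpochhammer (fps_X ^ 2) m * inverse (qpochhammer (fps_X ^ 1) m))"
  proof
    fix m
    show "R m = qpochhammer (fps_X ^ 2) m * inverse (qpochhammer (fps_X ^ 1) m)"
      using prod_one_plus_powers[where x = "fps_X :: rat fps" and m = m]
      by (intro fps_eq_mult_inverse) (simp_all add: R_def)
  qed
  moreover have "(\<lambda>m. qpochhammer (fps_X ^ 2) m * inverse (qpochhammer (fps_X ^ 1) m)) \<longlonglongrightarrow> eta_f 2 * inverse (eta_f 1)"
    by (intro tendsto_fps_mult tendsto_fps_inverse qpochhammer_tendsto_eta_f filterlim_ident) simp_all
  ultimately have "R \<longlonglongrightarrow> eta_f 2 * inverse (eta_f 1)"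
    by simp
  then have "(\<lambda>m. R (Suc m) * (2 * R m)) \<longlonglongrightarrow> eta_f 2 * inverse (eta_f 1) * (2 * (eta_f 2 * inverse (eta_f 1)))"
    by (intro tendsto_fps_mult tendsto_const LIMSEQ_Suc)
  moreover have "(\<Sum>k\<le>2 * Suc m. qbinomial (fps_X ^ 1) (2 * Suc m) k * fps_X ^ theta_exp 1 0 (int k - int (Suc m)))
      = R (Suc m) * (2 * R m)" for m
  proof -
    have "(\<Prod>i<Suc m. fps_X ^ (1 + (1 + 0) * i) + 1) = R (Suc m)"
      unfolding R_def by (intro prod.cong) (simp_all add: add.commute)
    moreover have "(\<Prod>j<Suc m. 1 + 1 * fps_X ^ (0 + (1 + 0) * j)) = 2 * R m"
      unfolding prod.lessThan_Suc_shift by (simp add: R_def)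
    ultimately show ?thesis
      using finite_triple_product[where x = "fps_X :: rat fps" and z = 1 and \<alpha> = 1 and \<beta> = 0
          and a = "Suc m" and b = "Suc m"]
      by (simp only: mult_2 add_0_right mult_1_right power_one)
  qed
  then have "(\<lambda>m. R (Suc m) * (2 * R m)) \<longlonglongrightarrow> inverse (eta_f 1) * theta 1 0"
    using LIMSEQ_Suc[OF theta_triple_product_tendsto[of 1 0]] by simp
  ultimately have "inverse (eta_f 1) * theta 1 0 = eta_f 2 * inverse (eta_f 1) * (2 * (eta_f 2 * inverse (eta_f 1)))"
    using LIMSEQ_unique by blast
  from arg_cong[OF this, of fps_to_fls] show ?thesis
    unfolding fps_to_fls_eq_iff[symmetric]
    by (simp add: fps_to_fls_simps) (simp add: field_simps eval_nat_numeral)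
qed

lemma theta_compose_X_power_nth:
  assumes "d \<ge> 1"
  shows "(theta \<alpha> \<beta> oo fps_X ^ d) $ n = of_nat (card {t. d * theta_exp \<alpha> \<beta> t = n})"
proof (cases "d dvd n")
  case True
  then have "{t. d * theta_exp \<alpha> \<beta> t = n} = {t. theta_exp \<alpha> \<beta> t = n div d}"
    using assms by auto
  then show ?thesis
    using True assms by (simp add: fps_compose_X_power_nth theta_def)
next
  case False
  then have "{t. d * theta_exp \<alpha> \<beta> t = n} = {}"
    by auto
  then show ?thesis
    using False assms by (simp add: fps_compose_X_power_nth)
qed

lemma of_nat_theta_exp_1_1: "int (theta_exp 1 1 t) = t\<^sup>2"
  unfolding of_nat_theta_exp using tri_plus_one[of t] two_tri[of t]
  by (simp add: power2_eq_square algebra_simps)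

lemma theta_exp_1_1_even: "theta_exp 1 1 (2 * s) = 4 * theta_exp 1 1 s"
  using of_nat_theta_exp_1_1[of "2 * s"] of_nat_theta_exp_1_1[of s]
  by (simp add: power2_eq_square)

lemma theta_exp_1_1_odd: "theta_exp 1 1 (2 * s - 1) = 8 * theta_exp 1 0 s + 1"
proof -
  have "int (theta_exp 1 1 (2 * s - 1)) = (2 * s - 1)\<^sup>2"
    by (rule of_nat_theta_exp_1_1)
  also have "\<dots> = 4 * (s * (s - 1)) + 1"
    by (simp add: power2_eq_square algebra_simps)
  also have "\<dots> = int (8 * theta_exp 1 0 s + 1)"
    using two_tri[of s] of_nat_theta_exp[of 1 0 s] by simp
  finally show ?thesis
    by (simp only: of_nat_eq_iff)
qed

lemma squares_split_by_parity:
  "{t. theta_exp 1 1 t = n}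
     = (\<lambda>s. 2 * s) ` {s. 4 * theta_exp 1 1 s = n} \<union> (\<lambda>s. 2 * s - 1) ` {s. 8 * theta_exp 1 0 s + 1 = n}"
proof (intro equalityI subsetI)
  fix t
  assume t: "t \<in> {t. theta_exp 1 1 t = n}"
  show "t \<in> (\<lambda>s. 2 * s) ` {s. 4 * theta_exp 1 1 s = n} \<union> (\<lambda>s. 2 * s - 1) ` {s. 8 * theta_exp 1 0 s + 1 = n}"
  proof (cases "even t")
    case True
    then obtain s where "t = 2 * s"
      by blast
    moreover have "4 * theta_exp 1 1 s = n"
      using t calculation theta_exp_1_1_even[of s] by simp
    ultimately show ?thesis
      by blast
  next
    case False
    define s where "s = (t + 1) div 2"
    have "t = 2 * s - 1"
      using False unfolding s_def by presburger
    moreover have "8 * theta_exp 1 0 s + 1 = n"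
      using t calculation theta_exp_1_1_odd[of s] by simp
    ultimately show ?thesis
      by blast
  qed
next
  fix t
  assume "t \<in> (\<lambda>s. 2 * s) ` {s. 4 * theta_exp 1 1 s = n} \<union> (\<lambda>s. 2 * s - 1) ` {s. 8 * theta_exp 1 0 s + 1 = n}"
  then show "t \<in> {t. theta_exp 1 1 t = n}"
    by (auto simp del: One_nat_def simp: theta_exp_1_1_even theta_exp_1_1_odd)
qed

lemma card_squares_split_by_parity:
  "card {t. theta_exp 1 1 t = n}
     = card {s. 4 * theta_exp 1 1 s = n} + card {s. 8 * theta_exp 1 0 s + 1 = n}"
proof -
  let ?E = "(\<lambda>s. 2 * s) ` {s. 4 * theta_exp 1 1 s = n}"
    and ?O = "(\<lambda>s. 2 * s - 1) ` {s. 8 * theta_exp 1 0 s + 1 = n}"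
  have "finite {t. theta_exp 1 1 t = n}"
    by (rule finite_theta_exp_fibre) simp
  then have "finite (?E \<union> ?O)"
    by (simp only: squares_split_by_parity)
  moreover have "?E \<inter> ?O = {}"
    by (auto simp: image_def) presburger
  ultimately have "card (?E \<union> ?O) = card ?E + card ?O"
    by (simp add: card_Un_disjoint)
  also have "\<dots> = card {s. 4 * theta_exp 1 1 s = n} + card {s. 8 * theta_exp 1 0 s + 1 = n}"
    by (simp add: card_image inj_on_def)
  finally show ?thesis
    unfolding squares_split_by_parity .
qed

lemma theta_1_1_dissection:
  "theta 1 1 = (theta 1 1 oo fps_X ^ 4) + fps_X * (theta 1 0 oo fps_X ^ 8)"
proof (rule fps_ext)
  fix n
  have "(fps_X * (theta 1 0 oo fps_X ^ 8)) $ n = of_nat (card {s. 8 * theta_exp 1 0 s + 1 = n})"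
  proof (cases n)
    case (Suc m)
    then have "{s. 8 * theta_exp 1 0 s = m} = {s. 8 * theta_exp 1 0 s + 1 = n}"
      by auto
    then show ?thesis
      using Suc by (simp add: theta_compose_X_power_nth)
  qed simp
  moreover have "(theta 1 1 oo fps_X ^ 4) $ n = of_nat (card {s. 4 * theta_exp 1 1 s = n})"
    by (rule theta_compose_X_power_nth) simp
  moreover have "theta 1 1 $ n = of_nat (card {t. theta_exp 1 1 t = n})"
    by (simp add: theta_def)
  ultimately show "theta 1 1 $ n = ((theta 1 1 oo fps_X ^ 4) + fps_X * (theta 1 0 oo fps_X ^ 8)) $ n"
    by (simp only: fps_add_nth card_squares_split_by_parity of_nat_add)
qed

lemma theta_1_1_compose_X_power_2:
  "theta 1 1 oo fps_X ^ 2 = eta_f 4 ^ 5 * inverse (eta_f 2 ^ 2 * eta_f 8 ^ 2)"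
  unfolding theta_1_1 by (simp add: eta_quotient_compose_simps fps_power_zeroth)

lemma theta_1_0_compose_X_power_4:
  "theta 1 0 oo fps_X ^ 4 = 2 * eta_f 8 ^ 2 * inverse (eta_f 4)"
  unfolding theta_1_0 by (simp add: eta_quotient_compose_simps fps_power_zeroth)

section \<open>Generalized overcubic partitions\<close>

lemma overcubic_gf_eq_theta:
  assumes "c \<ge> 1"
  shows "overcubic_gf c = (eta_f 2 ^ (c + 1) * inverse (eta_f 1 ^ (2 * c + 2)) oo fps_X ^ 2) * theta 1 1"
proof -
  obtain d where c: "c = Suc d"
    using assms by (cases c) auto
  have "eta_f 2 ^ (c + 1) * inverse (eta_f 1 ^ (2 * c + 2)) oo fps_X ^ 2
      = eta_f 4 ^ (c + 1) * inverse (eta_f 2 ^ (2 * c + 2))"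
    by (simp add: eta_quotient_compose_simps fps_power_zeroth)
  then show ?thesis
    unfolding overcubic_gf_def theta_1_1 fps_to_fls_eq_iff[symmetric]
    by (simp add: fps_to_fls_simps) (simp add: c field_simps eval_nat_numeral)
qed

lemma overcubic_gf_dissection:
  assumes "c \<ge> 1"
  defines "W \<equiv> eta_f 2 ^ (c + 1) * inverse (eta_f 1 ^ (2 * c + 2))"
  shows "overcubic_gf c = ((W * (theta 1 1 oo fps_X ^ 2)) oo fps_X ^ 2)
                         + fps_X * ((W * (theta 1 0 oo fps_X ^ 4)) oo fps_X ^ 2)"
proof -
  have "overcubic_gf c = (W oo fps_X ^ 2) * ((theta 1 1 oo fps_X ^ 4) + fps_X * (theta 1 0 oo fps_X ^ 8))"
    unfolding W_def overcubic_gf_eq_theta[OF assms(1)] by (subst theta_1_1_dissection) (rule refl)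
  also have "theta 1 1 oo fps_X ^ 4 = (theta 1 1 oo fps_X ^ 2) oo fps_X ^ 2"
    using fps_compose_X_power_mult[of 2 2] by simp
  also have "theta 1 0 oo fps_X ^ 8 = (theta 1 0 oo fps_X ^ 4) oo fps_X ^ 2"
    using fps_compose_X_power_mult[of 4 2] by simp
  finally show ?thesis
    by (simp add: fps_compose_mult_distrib algebra_simps)
qed

lemma even_part_eta_quotient:
  assumes "c \<ge> 1"
  shows "eta_f 2 ^ (c + 1) * inverse (eta_f 1 ^ (2 * c + 2)) * (theta 1 1 oo fps_X ^ 2)
       = eta_f 2 ^ (c - 1) * eta_f 4 ^ 5 * inverse (eta_f 1 ^ (2 * c + 2) * eta_f 8 ^ 2)"
proof -
  obtain d where c: "c = Suc d"
    using assms by (cases c) auto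
  show ?thesis
    unfolding theta_1_1_compose_X_power_2 fps_to_fls_eq_iff[symmetric]
    by (simp add: fps_to_fls_simps) (simp add: c field_simps eval_nat_numeral)
qed

lemma odd_part_eta_quotient:
  "eta_f 2 ^ (c + 1) * inverse (eta_f 1 ^ (2 * c + 2)) * (theta 1 0 oo fps_X ^ 4)
     = 2 * (eta_f 8 ^ 2 * inverse (eta_f 4)) * (eta_f 2 * inverse (eta_f 1 ^ 2)) ^ (c + 1)"
proof -
  have "eta_f 1 ^ (2 * c + 2) = (eta_f 1 ^ 2) ^ (c + 1)"
    unfolding power_mult[symmetric] by (rule arg_cong[where f = "power (eta_f 1)"]) simp
  then have "eta_f 2 ^ (c + 1) * inverse (eta_f 1 ^ (2 * c + 2)) = (eta_f 2 * inverse (eta_f 1 ^ 2)) ^ (c + 1)"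
    by (simp only: power_mult_distrib fps_inverse_power)
  then show ?thesis
    unfolding theta_1_0_compose_X_power_4 by (simp add: ac_simps)
qed

theorem lemma5p2:
  fixes c :: nat
  assumes "c \<ge> 1"
  shows "Abs_fps (\<lambda>n. abar c (2 * n)) =
           eta_f 2 ^ (c - 1) * eta_f 4 ^ 5 * inverse (eta_f 1 ^ (2 * c + 2) * eta_f 8 ^ 2)
     \<and> Abs_fps (\<lambda>n. abar c (2 * n + 1)) =
           2 * (eta_f 8 ^ 2 * inverse (eta_f 4)) * (eta_f 2 * inverse (eta_f 1 ^ 2)) ^ (c + 1)"
  unfolding abar_def overcubic_gf_dissection[OF assms] fps_even_odd_parts
  using even_part_eta_quotient[OF assms] odd_part_eta_quotient by simp

end
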